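(* For any positive integer $m$, there is an ancient curve shortening flow $\{\gamma_t\}_{t\in(-\infty,0)}\subset\mathbb{R}^{2m}$ that does not lie in any $(2m-1)$-dimensional Euclidean subspace and whose tangent flow as $t\to0$ (i.e. the limit of $\frac{\gamma_t}{\sqrt{-t}}$ as $t\to0$) is the embedded (multiplicity one) circle.
   Context: Curve shortening flow is one-dimensional mean curvature flow $\partial_tx=-\vec H$; ancient means defined for all $t\in(-\infty,0)$. *)

theory Defs
  imports "HOL-Analysis.Analysis"
begin

text \<open>Curvature vector of a regular parametrised curve at a point where the
  velocity is v and the acceleration is a:  kappa = (a - (a.T)T)/|v|^2 with T = v/|v|,
  i.e. the second derivative with respect to arclength.\<close>
definition curvature_vector :: "'a::real_inner \<Rightarrow> 'a \<Rightarrow> 'a" where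
  "curvature_vector v a = (1 / (norm v)\<^sup>2) *\<^sub>R (a - ((a \<bullet> v) / (norm v)\<^sup>2) *\<^sub>R v)"

text \<open>An ancient curve shortening flow of closed curves: gamma t is a 1-periodic,
  regular (immersed) closed curve for each time t < 0, C^2 in the curve parameter,
  C^1 in time, jointly continuous, and dgamma/dt equals the curvature vector
  (i.e. dx/dt = -H).\<close>
definition ancient_closed_csf :: "(real \<Rightarrow> real \<Rightarrow> 'a::euclidean_space) \<Rightarrow> bool" where
  "ancient_closed_csf \<gamma> \<longleftrightarrow>
     continuous_on ({..<0} \<times> UNIV) (\<lambda>(t,u). \<gamma> t u) \<and>
     (\<forall>t<0. \<forall>u. \<gamma> t (u + 1) = \<gamma> t u) \<and>
     (\<exists>\<gamma>u \<gamma>uu \<gamma>t. \<forall>t<0. \<forall>u.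
        ((\<lambda>u. \<gamma> t u) has_vector_derivative \<gamma>u t u) (at u) \<and>
        ((\<lambda>u. \<gamma>u t u) has_vector_derivative \<gamma>uu t u) (at u) \<and>
        ((\<lambda>s. \<gamma> s u) has_vector_derivative \<gamma>t t u) (at t) \<and>
        \<gamma>u t u \<noteq> 0 \<and>
        \<gamma>t t u = curvature_vector (\<gamma>u t u) (\<gamma>uu t u))"

text \<open>The round circle of radius sqrt 2 (radius of the shrinking circle sqrt(-2t) rescaled by sqrt(-t), for
  dx/dt = kappa) in the plane spanned by orthonormal e1, e2, traversed once.\<close>
definition circle_param :: "'a::real_inner \<Rightarrow> 'a \<Rightarrow> real \<Rightarrow> 'a" where
  "circle_param e1 e2 u = sqrt 2 *\<^sub>R (cos (2*pi*u) *\<^sub>R e1 + sin (2*pi*u) *\<^sub>R e2)"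

text \<open>Tangent flow at t -> 0 (blow-up centred at the origin) is the multiplicity-one
  circle: after a degree-one reparametrisation, gamma t / sqrt(-t) converges in C^1,
  uniformly in the parameter, to the circle traversed exactly once.\<close>
definition tangent_flow_is_circle :: "(real \<Rightarrow> real \<Rightarrow> 'a::euclidean_space) \<Rightarrow> bool" where
  "tangent_flow_is_circle \<gamma> \<longleftrightarrow>
     (\<exists>e1 e2 \<phi> \<psi>'. norm e1 = 1 \<and> norm e2 = 1 \<and> e1 \<bullet> e2 = 0 \<and>
        (\<forall>t<0. strict_mono (\<phi> t) \<and> continuous_on UNIV (\<phi> t) \<and>
                (\<forall>u. \<phi> t (u + 1) = \<phi> t u + 1) \<and>
                (\<forall>u. ((\<lambda>u. (1 / sqrt (-t)) *\<^sub>R \<gamma> t (\<phi> t u)) has_vector_derivative \<psi>' t u) (at u))) \<and>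
        (\<forall>\<epsilon>>0. \<exists>\<delta>>0. \<forall>t. -\<delta> < t \<and> t < 0 \<longrightarrow> (\<forall>u.
            norm ((1 / sqrt (-t)) *\<^sub>R \<gamma> t (\<phi> t u) - circle_param e1 e2 u) < \<epsilon> \<and>
            norm (\<psi>' t u - vector_derivative (circle_param e1 e2) (at u)) < \<epsilon>)))"

end

theory Submission
  imports Defs "HOL-Real_Asymp.Real_Asymp"
begin

text \<open>The flow is a superposition of m circles with frequencies 2 pi k, k = 1..m, in mutually
  orthogonal planes spanned by P k and Q k:
    gamma t u = sum_k r_k(t) (cos (2 pi k u) P k + sin (2 pi k u) Q k).
  Orthogonality of the planes gives |gamma_u|^2 = sum_k lam_k r_k^2 with lam_k = (2 pi k)^2 and
  gamma_uu orthogonal to gamma_u, so the curvature vector is gamma_uu / |gamma_u|^2 and the flow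
  reduces to the ODE system r_k' = - lam_k r_k / (sum_j lam_j r_j^2). It is solved by
  r_k = exp (- lam_k x) in an auxiliary time x related to t by t = - 1/2 sum_k exp (- 2 lam_k x).
  As t tends to 0 from below, x tends to infinity, the lowest mode dominates and
  r_k / sqrt (- t) tends to sqrt 2 if k = 1 and to 0 otherwise: the rescaled flow converges
  to the circle of radius sqrt 2. Since the exponentials exp (- lam_k x) are linearly
  independent, a hyperplane containing the flow is orthogonal to all P k and Q k, which
  span R^2m.\<close>

section \<open>The auxiliary time\<close>

definition freq :: "nat \<Rightarrow> real" where
  "freq k = 2 * pi * real k"

definition lam :: "nat \<Rightarrow> real" where
  "lam k = (freq k)\<^sup>2"

lemma strict_mono_lam: "strict_mono lam"
  unfolding strict_mono_def lam_def freq_def by (auto intro!: power_strict_mono)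

lemma lam_pos: "k \<ge> 1 \<Longrightarrow> lam k > 0"
  by (simp add: lam_def freq_def)

definition clock :: "nat \<Rightarrow> real \<Rightarrow> real" where
  "clock m x = - (1/2) * (\<Sum>k=1..m. exp (- 2 * lam k * x))"

definition clock_rate :: "nat \<Rightarrow> real \<Rightarrow> real" where
  "clock_rate m x = (\<Sum>k=1..m. lam k * exp (- 2 * lam k * x))"

definition clock_inv :: "nat \<Rightarrow> real \<Rightarrow> real" where
  "clock_inv m = inv (clock m)"

lemma has_real_derivative_clock: "(clock m has_real_derivative clock_rate m x) (at x)"
  unfolding clock_def [abs_def] clock_rate_def
  by (auto intro!: derivative_eq_intros sum.cong simp: sum_distrib_left sum_negf)

lemma clock_rate_pos: "m > 0 \<Longrightarrow> clock_rate m x > 0"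
  unfolding clock_rate_def by (intro sum_pos) (auto intro!: mult_pos_pos lam_pos)

lemma clock_neg: "m > 0 \<Longrightarrow> clock m x < 0"
  unfolding clock_def by (simp add: sum_pos)

lemma strict_mono_clock: "m > 0 \<Longrightarrow> strict_mono (clock m)"
  by (metis DERIV_pos_imp_increasing clock_rate_pos has_real_derivative_clock strict_monoI)

lemma clock_tendsto_0: "(clock m \<longlongrightarrow> 0) at_top"
proof -
  have "((\<lambda>x. \<Sum>k=1..m. exp (- 2 * lam k * x)) \<longlongrightarrow> 0) at_top"
  proof (rule tendsto_null_sum)
    fix k :: nat assume "k \<in> {1..m}"
    then have "lam k > 0" by (simp add: lam_pos)
    then show "((\<lambda>x. exp (- 2 * lam k * x)) \<longlongrightarrow> 0) at_top" by real_asymp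
  qed
  then show ?thesis
    unfolding clock_def [abs_def] using tendsto_mult_right_zero by blast
qed

lemma clock_le_linear:
  assumes "m > 0" shows "clock m x \<le> lam 1 * x - 1/2"
proof -
  have "1 - 2 * lam 1 * x \<le> exp (- 2 * lam 1 * x)"
    using exp_ge_add_one_self [of "- 2 * lam 1 * x"] by simp
  also have "\<dots> \<le> (\<Sum>k=1..m. exp (- 2 * lam k * x))"
    using assms by (intro member_le_sum) auto
  finally show ?thesis unfolding clock_def by simp
qed

lemma clock_surj: assumes "m > 0" "t < 0" shows "t \<in> range (clock m)"
proof -
  have "lam 1 > 0" by (simp add: lam_pos)
  define x where "x = t / lam 1"
  have "clock m x \<le> t"
    using clock_le_linear [OF assms(1), of x] \<open>lam 1 > 0\<close> by (simp add: x_def)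
  moreover obtain y where "t < clock m y"
    using order_tendstoD(1) [OF clock_tendsto_0 assms(2)] by (auto simp: eventually_at_top_linorder)
  moreover have "x \<le> y"
  proof (rule ccontr)
    assume "\<not> x \<le> y"
    then have "clock m y < clock m x"
      using strict_mono_clock [OF assms(1)] by (simp add: strict_mono_less)
    with calculation show False by simp
  qed
  ultimately obtain z where "clock m z = t"
    using IVT [of "clock m" x t y] DERIV_isCont [OF has_real_derivative_clock]
    by (meson less_imp_le)
  then show ?thesis by (metis rangeI)
qed

lemma clock_inv_clock: "m > 0 \<Longrightarrow> clock_inv m (clock m x) = x"
  unfolding clock_inv_def by (meson inv_f_f strict_mono_clock strict_mono_imp_inj_on)

lemma clock_clock_inv: "m > 0 \<Longrightarrow> t < 0 \<Longrightarrow> clock m (clock_inv m t) = t"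
  unfolding clock_inv_def by (meson clock_surj f_inv_into_f)

lemma isCont_clock_inv: assumes "m > 0" "t < 0" shows "isCont (clock_inv m) t"
proof -
  have "isCont (clock_inv m) (clock m (clock_inv m t))"
    by (rule isCont_inverse_function [where d = 1])
       (auto simp: clock_inv_clock [OF assms(1)] intro: DERIV_isCont [OF has_real_derivative_clock])
  then show ?thesis using clock_clock_inv [OF assms] by simp
qed

lemma has_real_derivative_clock_inv:
  assumes "m > 0" "t < 0"
  shows "(clock_inv m has_real_derivative 1 / clock_rate m (clock_inv m t)) (at t)"
proof -
  have "(clock_inv m has_real_derivative inverse (clock_rate m (clock_inv m t))) (at t)"
  proof (rule DERIV_inverse_function [where a = "t - 1" and b = 0 and f = "clock m"])
    show "(clock m has_real_derivative clock_rate m (clock_inv m t)) (at (clock_inv m t))"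
      by (rule has_real_derivative_clock)
    show "clock_rate m (clock_inv m t) \<noteq> 0"
      using clock_rate_pos [OF assms(1)] by (metis less_irrefl)
    show "\<And>y. t - 1 < y \<Longrightarrow> y < 0 \<Longrightarrow> clock m (clock_inv m y) = y"
      using clock_clock_inv [OF assms(1)] by blast
  qed (use assms isCont_clock_inv in auto)
  then show ?thesis by (simp add: divide_inverse)
qed

lemma clock_inv_at_top: assumes "m > 0" shows "filterlim (clock_inv m) at_top (at_left 0)"
  unfolding filterlim_at_top eventually_at_left_field
proof
  fix M :: real
  show "\<exists>b<0. \<forall>t>b. t < 0 \<longrightarrow> M \<le> clock_inv m t"
  proof (intro exI conjI allI impI)
    show "clock m M < 0" by (rule clock_neg [OF assms])
    fix t assume "clock m M < t" "t < 0"
    then have "clock m M < clock m (clock_inv m t)" using clock_clock_inv [OF assms] by simp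
    then show "M \<le> clock_inv m t"
      using strict_mono_clock [OF assms] by (simp add: strict_mono_less)
  qed
qed

section \<open>Orthogonal superpositions of circles\<close>

definition orthonormal_pairs :: "'i set \<Rightarrow> ('i \<Rightarrow> 'a::real_inner) \<Rightarrow> ('i \<Rightarrow> 'a) \<Rightarrow> bool" where
  "orthonormal_pairs K P Q \<longleftrightarrow> (\<forall>k\<in>K. \<forall>l\<in>K.
     P k \<bullet> P l = (if k = l then 1 else 0) \<and> Q k \<bullet> Q l = (if k = l then 1 else 0) \<and> P k \<bullet> Q l = 0)"

definition pair_comb ::
    "('i \<Rightarrow> 'a::real_vector) \<Rightarrow> ('i \<Rightarrow> 'a) \<Rightarrow> 'i set \<Rightarrow> ('i \<Rightarrow> real) \<Rightarrow> ('i \<Rightarrow> real) \<Rightarrow> 'a" where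
  "pair_comb P Q K x y = (\<Sum>k\<in>K. x k *\<^sub>R P k + y k *\<^sub>R Q k)"

lemma inner_pair_comb_right:
  "a \<bullet> pair_comb P Q K x y = (\<Sum>k\<in>K. x k * (a \<bullet> P k) + y k * (a \<bullet> Q k))"
  unfolding pair_comb_def inner_sum_right inner_add_right inner_scaleR_right ..

lemma inner_pair_comb:
  assumes "finite K" "orthonormal_pairs K P Q"
  shows "pair_comb P Q K x y \<bullet> pair_comb P Q K x' y' = (\<Sum>k\<in>K. x k * x' k + y k * y' k)"
proof -
  have "pair_comb P Q K x y \<bullet> pair_comb P Q K x' y' =
      (\<Sum>k\<in>K. \<Sum>l\<in>K. (x k *\<^sub>R P k + y k *\<^sub>R Q k) \<bullet> (x' l *\<^sub>R P l + y' l *\<^sub>R Q l))"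
    unfolding pair_comb_def inner_sum_left inner_sum_right by (rule sum.swap)
  also have "\<dots> = (\<Sum>k\<in>K. \<Sum>l\<in>K. if k = l then x k * x' k + y k * y' k else 0)"
  proof (intro sum.cong refl)
    fix k l assume "k \<in> K" "l \<in> K"
    then have "P k \<bullet> P l = (if k = l then 1 else 0)" "Q k \<bullet> Q l = (if k = l then 1 else 0)"
      "P k \<bullet> Q l = 0" "Q k \<bullet> P l = 0"
      using assms(2) unfolding orthonormal_pairs_def by (auto simp: inner_commute)
    then show "(x k *\<^sub>R P k + y k *\<^sub>R Q k) \<bullet> (x' l *\<^sub>R P l + y' l *\<^sub>R Q l) =
        (if k = l then x k * x' k + y k * y' k else 0)"
      by (simp add: inner_add_left inner_add_right)
  qed
  also have "\<dots> = (\<Sum>k\<in>K. x k * x' k + y k * y' k)"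
    using assms(1) by simp
  finally show ?thesis .
qed

lemma norm_pair_comb:
  assumes "finite K" "orthonormal_pairs K P Q"
  shows "norm (pair_comb P Q K x y) = sqrt (\<Sum>k\<in>K. (x k)\<^sup>2 + (y k)\<^sup>2)"
  unfolding norm_eq_sqrt_inner inner_pair_comb [OF assms] by (simp add: power2_eq_square)

lemma pair_comb_cong:
  "(\<And>k. k \<in> K \<Longrightarrow> x k = x' k) \<Longrightarrow> (\<And>k. k \<in> K \<Longrightarrow> y k = y' k) \<Longrightarrow>
    pair_comb P Q K x y = pair_comb P Q K x' y'"
  unfolding pair_comb_def by simp

lemma scaleR_pair_comb:
  "c *\<^sub>R pair_comb P Q K x y = pair_comb P Q K (\<lambda>k. c * x k) (\<lambda>k. c * y k)"
  unfolding pair_comb_def scaleR_sum_right by (simp add: scaleR_add_right)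

lemma diff_pair_comb:
  "pair_comb P Q K x y - pair_comb P Q K x' y' = pair_comb P Q K (\<lambda>k. x k - x' k) (\<lambda>k. y k - y' k)"
  unfolding pair_comb_def sum_subtractf [symmetric] by (intro sum.cong) (auto simp: algebra_simps)

lemma has_vector_derivative_pair_comb:
  assumes "\<And>k. k \<in> K \<Longrightarrow> ((\<lambda>s. x s k) has_real_derivative x' k) (at s0)"
    and "\<And>k. k \<in> K \<Longrightarrow> ((\<lambda>s. y s k) has_real_derivative y' k) (at s0)"
  shows "((\<lambda>s. pair_comb P Q K (x s) (y s)) has_vector_derivative pair_comb P Q K x' y') (at s0)"
  unfolding pair_comb_def
  by (intro has_vector_derivative_sum has_vector_derivative_add
      has_vector_derivative_scaleR [where g' = 0, simplified] assms
      has_vector_derivative_const)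

lemma sq_cos_plus_sq_sin: "(a * cos w)\<^sup>2 + (a * sin w)\<^sup>2 = (a::real)\<^sup>2"
  by (simp add: power_mult_distrib flip: distrib_left)

lemma sq_sin_plus_sq_cos: "(- (a * sin w))\<^sup>2 + (a * cos w)\<^sup>2 = (a::real)\<^sup>2"
  by (simp add: power_mult_distrib flip: distrib_left)

lemma curvature_vector_orthogonal:
  "a \<bullet> v = 0 \<Longrightarrow> curvature_vector v a = (1 / (norm v)\<^sup>2) *\<^sub>R a"
  unfolding curvature_vector_def by simp

section \<open>The flow\<close>

definition radius :: "nat \<Rightarrow> real \<Rightarrow> nat \<Rightarrow> real" where
  "radius m t k = exp (- lam k * clock_inv m t)"

definition flow :: "nat \<Rightarrow> (nat \<Rightarrow> 'a::real_vector) \<Rightarrow> (nat \<Rightarrow> 'a) \<Rightarrow> real \<Rightarrow> real \<Rightarrow> 'a" where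
  "flow m P Q t u = pair_comb P Q {1..m}
     (\<lambda>k. radius m t k * cos (freq k * u)) (\<lambda>k. radius m t k * sin (freq k * u))"

definition flow_u :: "nat \<Rightarrow> (nat \<Rightarrow> 'a::real_vector) \<Rightarrow> (nat \<Rightarrow> 'a) \<Rightarrow> real \<Rightarrow> real \<Rightarrow> 'a" where
  "flow_u m P Q t u = pair_comb P Q {1..m}
     (\<lambda>k. - (radius m t k * freq k * sin (freq k * u)))
     (\<lambda>k. radius m t k * freq k * cos (freq k * u))"

definition flow_uu :: "nat \<Rightarrow> (nat \<Rightarrow> 'a::real_vector) \<Rightarrow> (nat \<Rightarrow> 'a) \<Rightarrow> real \<Rightarrow> real \<Rightarrow> 'a" where
  "flow_uu m P Q t u = pair_comb P Q {1..m}
     (\<lambda>k. - (radius m t k * lam k * cos (freq k * u)))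
     (\<lambda>k. - (radius m t k * lam k * sin (freq k * u)))"

lemma has_vector_derivative_flow:
  "((\<lambda>u. flow m P Q t u) has_vector_derivative flow_u m P Q t u) (at u)"
  unfolding flow_def flow_u_def
  by (rule has_vector_derivative_pair_comb) (auto intro!: derivative_eq_intros)

lemma has_vector_derivative_flow_u:
  "((\<lambda>u. flow_u m P Q t u) has_vector_derivative flow_uu m P Q t u) (at u)"
  unfolding flow_u_def flow_uu_def
  by (rule has_vector_derivative_pair_comb)
    (auto intro!: derivative_eq_intros simp: lam_def power2_eq_square)

lemma has_vector_derivative_flow_time:
  assumes "m > 0" "t < 0"
  shows "((\<lambda>s. flow m P Q s u) has_vector_derivative
           (1 / clock_rate m (clock_inv m t)) *\<^sub>R flow_uu m P Q t u) (at t)"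
  unfolding flow_def flow_uu_def scaleR_pair_comb radius_def
  by (rule has_vector_derivative_pair_comb)
     (auto intro!: derivative_eq_intros has_real_derivative_clock_inv [OF assms])

lemma norm_flow_u:
  assumes "orthonormal_pairs {1..m} P Q"
  shows "(norm (flow_u m P Q t u))\<^sup>2 = clock_rate m (clock_inv m t)"
proof -
  have "(norm (flow_u m P Q t u))\<^sup>2 = (\<Sum>k=1..m. (radius m t k * freq k)\<^sup>2)"
    unfolding flow_u_def norm_pair_comb [OF finite_atLeastAtMost assms]
    using sq_sin_plus_sq_cos [of "radius m t k * freq k" for k] by (simp add: mult.assoc sum_nonneg)
  also have "\<dots> = clock_rate m (clock_inv m t)"
    unfolding clock_rate_def radius_def lam_def
    by (intro sum.cong refl) (simp add: power_mult_distrib flip: exp_of_nat_mult)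
  finally show ?thesis .
qed

lemma flow_uu_orthogonal:
  "orthonormal_pairs {1..m} P Q \<Longrightarrow> flow_uu m P Q t u \<bullet> flow_u m P Q t u = 0"
  unfolding flow_u_def flow_uu_def inner_pair_comb [OF finite_atLeastAtMost]
  by (simp add: algebra_simps)

lemma flow_periodic: "flow m P Q t (u + 1) = flow m P Q t u"
proof -
  have "freq k * (u + 1) = freq k * u + 2 * real k * pi" for k
    unfolding freq_def by (simp add: algebra_simps)
  then show ?thesis
    unfolding flow_def by (intro pair_comb_cong) (simp_all add: cos_add sin_add)
qed

lemma continuous_on_flow:
  fixes P Q :: "nat \<Rightarrow> 'a::real_normed_vector"
  assumes "m > 0"
  shows "continuous_on ({..<0} \<times> UNIV) (\<lambda>(t, u). flow m P Q t u)"
proof -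
  have "continuous_on {..<0} (clock_inv m)"
    using isCont_clock_inv [OF assms] by (simp add: continuous_at_imp_continuous_on)
  then have "continuous_on ({..<0} \<times> UNIV) (\<lambda>z. clock_inv m (fst z))"
    by (rule continuous_on_compose2 [OF _ continuous_on_fst]) auto
  then show ?thesis
    unfolding flow_def pair_comb_def radius_def case_prod_beta
    by (intro continuous_intros)
qed

theorem ancient_closed_csf_flow:
  fixes P Q :: "nat \<Rightarrow> 'a::euclidean_space"
  assumes "m > 0" "orthonormal_pairs {1..m} P Q"
  shows "ancient_closed_csf (flow m P Q)"
  unfolding ancient_closed_csf_def
proof (intro conjI allI impI exI)
  fix t u :: real assume "t < 0"
  have speed: "(norm (flow_u m P Q t u))\<^sup>2 = clock_rate m (clock_inv m t)"
    by (rule norm_flow_u [OF assms(2)])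
  then show "flow_u m P Q t u \<noteq> 0"
    using clock_rate_pos [OF assms(1)] by (metis less_irrefl norm_zero zero_power2)
  show "(1 / clock_rate m (clock_inv m t)) *\<^sub>R flow_uu m P Q t u =
      curvature_vector (flow_u m P Q t u) (flow_uu m P Q t u)"
    by (simp add: curvature_vector_orthogonal flow_uu_orthogonal [OF assms(2)] speed)
qed (use assms continuous_on_flow flow_periodic has_vector_derivative_flow
       has_vector_derivative_flow_u has_vector_derivative_flow_time in auto)

section \<open>The tangent flow at the origin\<close>

definition excess :: "nat \<Rightarrow> real \<Rightarrow> real" where
  "excess m x = (\<Sum>k=2..m. exp (- 2 * (lam k - lam 1) * x))"

lemma excess_tendsto_0: "(excess m \<longlongrightarrow> 0) at_top"
  unfolding excess_def [abs_def]
proof (rule tendsto_null_sum)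
  fix k :: nat assume "k \<in> {2..m}"
  then have "lam k - lam 1 > 0" using strict_mono_lam by (simp add: strict_mono_less)
  then show "((\<lambda>x. exp (- 2 * (lam k - lam 1) * x)) \<longlongrightarrow> 0) at_top" by real_asymp
qed

lemma neg_clock_eq: "m > 0 \<Longrightarrow> - clock m x = (exp (- lam 1 * x))\<^sup>2 * ((1 + excess m x) / 2)"
proof -
  assume "m > 0"
  then have "{1..m} = insert 1 {2..m}" by auto
  then have "(\<Sum>k=1..m. exp (- 2 * lam k * x)) =
      exp (- 2 * lam 1 * x) + (\<Sum>k=2..m. exp (- 2 * lam k * x))"
    by simp
  also have "\<dots> = (exp (- lam 1 * x))\<^sup>2 * (1 + excess m x)"
  proof -
    have "exp (- 2 * lam k * x) = (exp (- lam 1 * x))\<^sup>2 * exp (- 2 * (lam k - lam 1) * x)" for k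
      by (simp add: power2_eq_square algebra_simps flip: exp_add)
    then show ?thesis
      unfolding excess_def distrib_left sum_distrib_left by (simp only:) simp
  qed
  finally show ?thesis unfolding clock_def by simp
qed

lemma exp_div_sqrt_neg_clock:
  assumes "m > 0"
  shows "exp (- lam k * x) / sqrt (- clock m x) =
    exp (- (lam k - lam 1) * x) / sqrt ((1 + excess m x) / 2)"
proof -
  have "sqrt (- clock m x) = exp (- lam 1 * x) * sqrt ((1 + excess m x) / 2)"
    unfolding neg_clock_eq [OF assms] real_sqrt_mult by simp
  moreover have "exp (- lam k * x) = exp (- lam 1 * x) * exp (- (lam k - lam 1) * x)"
    by (simp add: algebra_simps flip: exp_add)
  ultimately show ?thesis by simp
qed

definition limit_radius :: "nat \<Rightarrow> real" where
  "limit_radius k = (if k = 1 then sqrt 2 else 0)"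

lemma rescaled_radius_tendsto:
  assumes "m > 0" "k \<in> {1..m}"
  shows "((\<lambda>t. radius m t k / sqrt (- t)) \<longlongrightarrow> limit_radius k) (at_left 0)"
proof -
  have "((\<lambda>x. exp (- (lam k - lam 1) * x)) \<longlongrightarrow> (if k = 1 then 1 else 0)) at_top"
  proof (cases "k = 1")
    case False
    with assms(2) have "lam k - lam 1 > 0" using strict_mono_lam by (simp add: strict_mono_less)
    with False show ?thesis by simp real_asymp
  qed simp
  then have "((\<lambda>x. exp (- (lam k - lam 1) * x) / sqrt ((1 + excess m x) / 2)) \<longlongrightarrow>
      (if k = 1 then 1 else 0) / sqrt ((1 + 0) / 2)) at_top"
    by (intro tendsto_intros excess_tendsto_0) auto
  moreover have "(if k = 1 then 1 else 0) / sqrt ((1 + 0) / 2) = limit_radius k"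
    by (simp add: limit_radius_def real_sqrt_divide)
  ultimately have "((\<lambda>x. exp (- lam k * x) / sqrt (- clock m x)) \<longlongrightarrow> limit_radius k) at_top"
    unfolding exp_div_sqrt_neg_clock [OF assms(1)] by simp
  from filterlim_compose [OF this clock_inv_at_top [OF assms(1)]]
  show ?thesis
  proof (rule tendsto_cong [THEN iffD1, rotated])
    show "\<forall>\<^sub>F t in at_left 0. exp (- lam k * clock_inv m t) / sqrt (- clock m (clock_inv m t)) =
        radius m t k / sqrt (- t)"
      unfolding eventually_at_left_field
      by (rule exI [of _ "-1"]) (auto simp: radius_def clock_clock_inv [OF assms(1)])
  qed
qed

lemma circle_param_eq_pair_comb:
  assumes "m > 0"
  shows "circle_param (P 1) (Q 1) =
    (\<lambda>u. pair_comb P Q {1..m} (\<lambda>k. limit_radius k * cos (freq k * u))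
      (\<lambda>k. limit_radius k * sin (freq k * u)))"
proof
  fix u
  have "pair_comb P Q {1..m} (\<lambda>k. limit_radius k * cos (freq k * u))
      (\<lambda>k. limit_radius k * sin (freq k * u)) =
      (\<Sum>k=1..m. if k = 1 then circle_param (P 1) (Q 1) u else 0)"
    unfolding pair_comb_def
    by (intro sum.cong) (auto simp: limit_radius_def circle_param_def freq_def scaleR_add_right)
  then show "circle_param (P 1) (Q 1) u =
      pair_comb P Q {1..m} (\<lambda>k. limit_radius k * cos (freq k * u))
        (\<lambda>k. limit_radius k * sin (freq k * u))"
    using assms by simp
qed

lemma vector_derivative_circle_param:
  assumes "m > 0"
  shows "vector_derivative (circle_param (P 1) (Q 1)) (at u) =
    pair_comb P Q {1..m}
      (\<lambda>k. - (limit_radius k * freq k * sin (freq k * u)))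
       (\<lambda>k. limit_radius k * freq k * cos (freq k * u))"
  unfolding circle_param_eq_pair_comb [OF assms]
  by (rule vector_derivative_at, rule has_vector_derivative_pair_comb)
    (auto intro!: derivative_eq_intros)

lemma norm_rescaled_flow_minus_circle:
  assumes "m > 0" "orthonormal_pairs {1..m} P Q"
  shows "norm ((1 / sqrt (- t)) *\<^sub>R flow m P Q t u - circle_param (P 1) (Q 1) u) =
    sqrt (\<Sum>k=1..m. (radius m t k / sqrt (- t) - limit_radius k)\<^sup>2)"
proof -
  have "(1 / sqrt (- t)) *\<^sub>R flow m P Q t u - circle_param (P 1) (Q 1) u =
      pair_comb P Q {1..m} (\<lambda>k. (radius m t k / sqrt (- t) - limit_radius k) * cos (freq k * u))
        (\<lambda>k. (radius m t k / sqrt (- t) - limit_radius k) * sin (freq k * u))"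
    unfolding flow_def circle_param_eq_pair_comb [OF assms(1)] scaleR_pair_comb diff_pair_comb
    by (rule pair_comb_cong) (simp_all add: algebra_simps)
  then show ?thesis
    by (simp only: norm_pair_comb [OF finite_atLeastAtMost assms(2)] sq_cos_plus_sq_sin)
qed

lemma norm_rescaled_flow_u_minus_circle_deriv:
  assumes "m > 0" "orthonormal_pairs {1..m} P Q"
  shows "norm ((1 / sqrt (- t)) *\<^sub>R flow_u m P Q t u -
      vector_derivative (circle_param (P 1) (Q 1)) (at u)) =
    sqrt (\<Sum>k=1..m. ((radius m t k / sqrt (- t) - limit_radius k) * freq k)\<^sup>2)"
proof -
  have "(1 / sqrt (- t)) *\<^sub>R flow_u m P Q t u -
      vector_derivative (circle_param (P 1) (Q 1)) (at u) =
      pair_comb P Q {1..m}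
        (\<lambda>k. - ((radius m t k / sqrt (- t) - limit_radius k) * freq k * sin (freq k * u)))
        (\<lambda>k. (radius m t k / sqrt (- t) - limit_radius k) * freq k * cos (freq k * u))"
    unfolding flow_u_def vector_derivative_circle_param [OF assms(1)]
      scaleR_pair_comb diff_pair_comb
    by (rule pair_comb_cong) (simp_all add: algebra_simps)
  then show ?thesis
    by (simp only: norm_pair_comb [OF finite_atLeastAtMost assms(2)] sq_sin_plus_sq_cos)
qed

theorem tangent_flow_is_circle_flow:
  fixes P Q :: "nat \<Rightarrow> 'a::euclidean_space"
  assumes "m > 0" "orthonormal_pairs {1..m} P Q"
  shows "tangent_flow_is_circle (flow m P Q)"
proof -
  define err where "err t = sqrt (\<Sum>k=1..m. (radius m t k / sqrt (- t) - limit_radius k)\<^sup>2)" for t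
  define err' where "err' t = sqrt
    (\<Sum>k=1..m. ((radius m t k / sqrt (- t) - limit_radius k) * freq k)\<^sup>2)" for t
  have e: "((\<lambda>t. radius m t k / sqrt (- t) - limit_radius k) \<longlongrightarrow> 0) (at_left 0)" if "k \<in> {1..m}" for k
    using LIM_zero [OF rescaled_radius_tendsto [OF assms(1) that]] .
  have sq: "((\<lambda>t. (radius m t k / sqrt (- t) - limit_radius k)\<^sup>2) \<longlongrightarrow> 0) (at_left 0)"
    "((\<lambda>t. ((radius m t k / sqrt (- t) - limit_radius k) * freq k)\<^sup>2) \<longlongrightarrow> 0) (at_left 0)"
    if "k \<in> {1..m}" for k
    using tendsto_power [OF e [OF that], where n = 2]
      tendsto_power [OF tendsto_mult_left_zero [OF e [OF that]], where n = 2]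
    by simp_all
  have "((\<lambda>t. \<Sum>k=1..m. (radius m t k / sqrt (- t) - limit_radius k)\<^sup>2) \<longlongrightarrow> 0) (at_left 0)"
    "((\<lambda>t. \<Sum>k=1..m. ((radius m t k / sqrt (- t) - limit_radius k) * freq k)\<^sup>2) \<longlongrightarrow> 0) (at_left 0)"
    by (intro tendsto_null_sum sq; simp)+
  from this [THEN tendsto_real_sqrt] have "(err \<longlongrightarrow> 0) (at_left 0)" "(err' \<longlongrightarrow> 0) (at_left 0)"
    unfolding err_def [abs_def] err'_def [abs_def] by simp_all
  then have small: "\<exists>\<delta>>0. \<forall>t. - \<delta> < t \<and> t < 0 \<longrightarrow> err t < \<epsilon> \<and> err' t < \<epsilon>" if "\<epsilon> > 0" for \<epsilon>
  proof -
    have "\<forall>\<^sub>F t in at_left 0. err t < \<epsilon> \<and> err' t < \<epsilon>"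
      using \<open>(err \<longlongrightarrow> 0) (at_left 0)\<close> \<open>(err' \<longlongrightarrow> 0) (at_left 0)\<close> \<open>\<epsilon> > 0\<close>
      by (intro eventually_conj order_tendstoD(2))
    then obtain b where "b < 0" "\<forall>t>b. t < 0 \<longrightarrow> err t < \<epsilon> \<and> err' t < \<epsilon>"
      unfolding eventually_at_left_field by blast
    then show ?thesis by (intro exI [of _ "- b"]) auto
  qed
  have unit: "P 1 \<bullet> P 1 = 1" "Q 1 \<bullet> Q 1 = 1" "P 1 \<bullet> Q 1 = 0"
    using assms unfolding orthonormal_pairs_def by auto
  show ?thesis
    unfolding tangent_flow_is_circle_def
  proof (rule exI [of _ "P 1"], rule exI [of _ "Q 1"], rule exI [of _ "\<lambda>t u. u"],
      rule exI [of _ "\<lambda>t u. (1 / sqrt (- t)) *\<^sub>R flow_u m P Q t u"], intro conjI allI impI)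
    show "norm (P 1) = 1" using unit by (simp add: norm_eq_sqrt_inner)
    show "norm (Q 1) = 1" using unit by (simp add: norm_eq_sqrt_inner)
    show "P 1 \<bullet> Q 1 = 0" by (fact unit)
    show "strict_mono (\<lambda>u::real. u)" by (simp add: strict_mono_def)
    show "continuous_on UNIV (\<lambda>u::real. u)" by simp
    show "((\<lambda>u. (1 / sqrt (- t)) *\<^sub>R flow m P Q t u) has_vector_derivative
        (1 / sqrt (- t)) *\<^sub>R flow_u m P Q t u) (at u)" for t u
      using has_vector_derivative_scaleR [OF DERIV_const has_vector_derivative_flow] by simp
  next
    fix \<epsilon> :: real assume "\<epsilon> > 0"
    then show "\<exists>\<delta>>0. \<forall>t. - \<delta> < t \<and> t < 0 \<longrightarrow> (\<forall>u.
        norm ((1 / sqrt (- t)) *\<^sub>R flow m P Q t u - circle_param (P 1) (Q 1) u) < \<epsilon> \<and>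
        norm ((1 / sqrt (- t)) *\<^sub>R flow_u m P Q t u -
          vector_derivative (circle_param (P 1) (Q 1)) (at u)) < \<epsilon>)"
      using small unfolding norm_rescaled_flow_minus_circle [OF assms]
        norm_rescaled_flow_u_minus_circle_deriv [OF assms] err_def err'_def by simp
  qed simp
qed

section \<open>The flow spans the whole space\<close>

lemma exp_sum_const_imp_coeffs_zero:
  fixes a c :: "'i \<Rightarrow> real"
  assumes "finite K" "inj_on a K" "\<And>k. k \<in> K \<Longrightarrow> a k > 0"
    and sum_eq: "\<And>x. (\<Sum>k\<in>K. c k * exp (- a k * x)) = b"
  shows "\<forall>k\<in>K. c k = 0"
proof (rule ccontr)
  define K' where "K' = {k \<in> K. c k \<noteq> 0}"
  assume "\<not> (\<forall>k\<in>K. c k = 0)"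
  then have "K' \<noteq> {}" "finite K'" using assms(1) by (auto simp: K'_def)
  then have "Max (a ` K') \<in> a ` K'" by (intro Max_in) auto
  then obtain k0 where "k0 \<in> K'" and k0_max: "Max (a ` K') = a k0" by (metis imageE)
  then have k0: "k0 \<in> K" "c k0 \<noteq> 0" "a k0 > 0" using assms(3) by (auto simp: K'_def)
  have top: "a k < a k0" if "k \<in> K'" "k \<noteq> k0" for k
  proof -
    have "a k \<le> a k0" unfolding k0_max [symmetric] using \<open>finite K'\<close> \<open>k \<in> K'\<close> by simp
    moreover have "a k \<noteq> a k0"
      using inj_onD [OF assms(2)] that \<open>k0 \<in> K\<close> by (auto simp: K'_def)
    ultimately show ?thesis by simp
  qed
  have eq: "(\<Sum>k\<in>K'. c k * exp ((a k0 - a k) * x)) = b * exp (a k0 * x)" for x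
  proof -
    have "(\<Sum>k\<in>K. c k * exp (- a k * x)) = (\<Sum>k\<in>K'. c k * exp (- a k * x))"
      unfolding K'_def by (rule sum.mono_neutral_right [OF assms(1)]) auto
    then have "(\<Sum>k\<in>K'. c k * exp (- a k * x)) = b"
      using sum_eq [of x] by simp
    then have "(\<Sum>k\<in>K'. exp (a k0 * x) * (c k * exp (- a k * x))) = b * exp (a k0 * x)"
      by (simp flip: sum_distrib_left)
    then show ?thesis by (simp add: algebra_simps flip: exp_add)
  qed
  have "((\<lambda>x. \<Sum>k\<in>K'. c k * exp ((a k0 - a k) * x)) \<longlongrightarrow> (\<Sum>k\<in>K'. if k = k0 then c k else 0)) at_bot"
  proof (rule tendsto_sum)
    fix k assume "k \<in> K'"
    show "((\<lambda>x. c k * exp ((a k0 - a k) * x)) \<longlongrightarrow> (if k = k0 then c k else 0)) at_bot"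
    proof (cases "k = k0")
      case False
      with top [OF \<open>k \<in> K'\<close>] have "a k0 - a k > 0" by simp
      with False show ?thesis by simp real_asymp
    qed simp
  qed
  then have "((\<lambda>x. b * exp (a k0 * x)) \<longlongrightarrow> c k0) at_bot"
    using \<open>finite K'\<close> \<open>k0 \<in> K'\<close> by (simp add: eq)
  moreover have "((\<lambda>x. b * exp (a k0 * x)) \<longlongrightarrow> 0) at_bot"
    using \<open>a k0 > 0\<close> by real_asymp
  ultimately show False
    using k0(2) tendsto_unique [OF trivial_limit_at_bot_linorder] by blast
qed

lemma flow_in_hyperplane_imp_orthogonal:
  assumes "m > 0" and hyp: "\<And>t u. t < 0 \<Longrightarrow> a \<bullet> flow m P Q t u = b"
  shows "\<forall>k\<in>{1..m}. a \<bullet> P k = 0 \<and> a \<bullet> Q k = 0"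
proof -
  have coeffs: "\<forall>k\<in>{1..m}. cos (freq k * u) * (a \<bullet> P k) + sin (freq k * u) * (a \<bullet> Q k) = 0" for u
  proof (rule exp_sum_const_imp_coeffs_zero)
    show "inj_on lam {1..m}" by (rule strict_mono_imp_inj_on [OF strict_mono_lam])
    show "(\<Sum>k=1..m. (cos (freq k * u) * (a \<bullet> P k) + sin (freq k * u) * (a \<bullet> Q k))
        * exp (- lam k * x)) = b"
      for x
      using hyp [OF clock_neg [OF assms(1)], of x u]
      unfolding flow_def inner_pair_comb_right radius_def clock_inv_clock [OF assms(1)]
      by (simp add: algebra_simps)
  qed (auto intro: lam_pos)
  show ?thesis
  proof
    fix k assume k: "k \<in> {1..m}"
    have "a \<bullet> P k = 0"
      using bspec [OF coeffs [of 0] k] by simp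
    moreover have "sin (freq k / (4 * real k)) = 1"
      using k by (simp add: freq_def)
    ultimately show "a \<bullet> P k = 0 \<and> a \<bullet> Q k = 0"
      using bspec [OF coeffs [of "1 / (4 * real k)"] k] by simp
  qed
qed

lemma obtain_spanning_orthonormal_pairs:
  assumes "CARD('n::finite) = 2 * m"
  obtains P Q :: "nat \<Rightarrow> real ^ 'n"
  where "orthonormal_pairs {1..m} P Q"
    and "\<And>a. \<forall>k\<in>{1..m}. a \<bullet> P k = 0 \<and> a \<bullet> Q k = 0 \<Longrightarrow> a = 0"
proof -
  obtain h where h: "bij_betw h {0..<2 * m} (UNIV :: 'n set)"
    using ex_bij_betw_nat_finite [of "UNIV :: 'n set"] assms by auto
  define P :: "nat \<Rightarrow> real ^ 'n" where "P k = axis (h (2 * k - 2)) 1" for k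
  define Q :: "nat \<Rightarrow> real ^ 'n" where "Q k = axis (h (2 * k - 1)) 1" for k
  have h_eq: "h i = h j \<longleftrightarrow> i = j" if "i < 2 * m" "j < 2 * m" for i j
    using inj_onD [OF bij_betw_imp_inj_on [OF h]] that by auto
  have "orthonormal_pairs {1..m} P Q"
    unfolding orthonormal_pairs_def P_def Q_def inner_axis_axis
    by (auto simp: h_eq)
  moreover have "a = 0" if a: "\<forall>k\<in>{1..m}. a \<bullet> P k = 0 \<and> a \<bullet> Q k = 0" for a
  proof (rule vec_eq_iff [THEN iffD2], rule allI)
    fix i :: 'n
    have "i \<in> h ` {0..<2 * m}" using h by (simp add: bij_betw_def)
    then obtain j where j: "j < 2 * m" "h j = i" by auto
    define k where "k = j div 2 + 1"
    have "k \<in> {1..m}" using j(1) by (simp add: k_def)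
    moreover have "j = 2 * k - 2 \<or> j = 2 * k - 1" unfolding k_def by presburger
    ultimately show "a $ i = 0 $ i"
      using a j(2) by (auto simp: P_def Q_def inner_axis)
  qed
  ultimately show ?thesis by (rule that)
qed

theorem corollary2p4:
  fixes m :: nat
  assumes "m > 0" and "CARD('n::finite) = 2 * m"
  shows "\<exists>\<gamma> :: real \<Rightarrow> real \<Rightarrow> real ^ 'n.
           ancient_closed_csf \<gamma> \<and>
           \<not> (\<exists>S. affine S \<and> aff_dim S = int (2 * m - 1) \<and>
                  (\<forall>t<0. \<forall>u. \<gamma> t u \<in> S)) \<and>
           tangent_flow_is_circle \<gamma>"
proof -
  obtain P Q :: "nat \<Rightarrow> real ^ 'n" where orth: "orthonormal_pairs {1..m} P Q"
    and span: "\<And>a. \<forall>k\<in>{1..m}. a \<bullet> P k = 0 \<and> a \<bullet> Q k = 0 \<Longrightarrow> a = 0"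
    using obtain_spanning_orthonormal_pairs [OF assms(2)] by blast
  have "\<not> (\<exists>S. affine S \<and> aff_dim S = int (2 * m - 1) \<and> (\<forall>t<0. \<forall>u. flow m P Q t u \<in> S))"
  proof
    assume "\<exists>S. affine S \<and> aff_dim S = int (2 * m - 1) \<and> (\<forall>t<0. \<forall>u. flow m P Q t u \<in> S)"
    then obtain S where S: "affine S"
      "aff_dim S = int (DIM(real ^ 'n) - 1)" "\<forall>t<0. \<forall>u. flow m P Q t u \<in> S"
      using assms by auto
    obtain a b where "a \<noteq> 0" "affine hull S = {x. a \<bullet> x = b}"
      using aff_dim_eq_hyperplane [THEN iffD1, OF S(2)] by blast
    moreover have "affine hull S = S" using S(1) by (simp add: affine_hull_eq)
    ultimately have "S = {x. a \<bullet> x = b}" by simp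
    with S(3) have "a \<bullet> flow m P Q t u = b" if "t < 0" for t u
      using that by auto
    then have "a = 0"
      using span flow_in_hyperplane_imp_orthogonal [OF assms(1)] by blast
    with \<open>a \<noteq> 0\<close> show False ..
  qed
  then show ?thesis
    using ancient_closed_csf_flow [OF assms(1) orth]
      tangent_flow_is_circle_flow [OF assms(1) orth] by blast
qed

end
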